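(* Let $T=(T_a,T_b)$ be a rooted binary phylogenetic $X$-tree with strictly positive edge lengths and maximal pendant subtrees $T_a,T_b$ with leaf sets $X_a,X_b$. Let $X'\subset X$ be such that $X_a\not\subseteq X'$ and $X_b\not\subseteq X'$, and let $\widetilde T=T_{\widetilde X}$ with $\widetilde X=X\setminus X'$. Then $FP_T(x)\leq FP_{\widetilde T}(x)$ for all $x\in\widetilde X$.
   Context: A rooted binary phylogenetic $X$-tree ($X$ finite, $|X|\ge 2$ here) is a rooted tree whose root $\rho$ has in-degree 0 and out-degree 2, all edges directed away from $\rho$, all other interior vertices have in-degree 1 and out-degree 2, and whose leaves are bijectively labelled by $X$. $T=(T_a,T_b)$ denotes the decomposition into the two maximal pendant subtrees rooted at the children $a,b$ of $\rho$, with leaf sets $X_a,X_b$. Every edge $e$ has a strictly positive length $\lambda_e$. The Fair Proportion index of $x\in X$ is $FP_T(x)=\sum_{e\in P(T;\rho,x)}\lambda_e/D_e$, where $P(T;\rho,x)$ is the path from $\rho$ to $x$ and $D_e$ is the number of leaves descended from $e$. For $Y\subseteq X$, the induced subtree $T_Y$ is obtained from the minimal subtree of $T$ connecting $Y$ by suppressing all non-root vertices of in- and out-degree 1, adding the lengths of merged edges; if the root then has out-degree 1, it and its incident edge are deleted. *)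

theory Defs
  imports Complex_Main
begin

text \<open>A node has exactly two
children; each child is paired with the (positive) length of the edge from the
node to that child.  The root has no incoming edge.\<close>

datatype 'a ptree = Leaf 'a | Node "real \<times> 'a ptree" "real \<times> 'a ptree"

fun leaves :: "'a ptree \<Rightarrow> 'a list" where
  "leaves (Leaf x) = [x]"
| "leaves (Node (l1, t1) (l2, t2)) = leaves t1 @ leaves t2"

fun pos_lengths :: "'a ptree \<Rightarrow> bool" where
  "pos_lengths (Leaf x) = True"
| "pos_lengths (Node (l1, t1) (l2, t2)) =
     (l1 > 0 \<and> l2 > 0 \<and> pos_lengths t1 \<and> pos_lengths t2)"

definition phylo :: "'a ptree \<Rightarrow> bool" where
  "phylo T \<longleftrightarrow> distinct (leaves T) \<and> pos_lengths T"

text \<open>Fair Proportion index: sum over the edges e on the path from the root to x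
of lambda_e / D_e, where D_e is the number of leaves below e.\<close>
fun FP :: "'a ptree \<Rightarrow> 'a \<Rightarrow> real" where
  "FP (Leaf y) x = 0"
| "FP (Node (l1, t1) (l2, t2)) x =
     (if x \<in> set (leaves t1) then l1 / real (card (set (leaves t1))) + FP t1 x
      else if x \<in> set (leaves t2) then l2 / real (card (set (leaves t2))) + FP t2 x
      else 0)"

text \<open>Restriction of a planted subtree (incoming edge of length l, subtree t) to Y:
minimal connecting subtree with degree-2 vertices suppressed (lengths added).\<close>
fun restrE :: "'a set \<Rightarrow> real \<times> 'a ptree \<Rightarrow> (real \<times> 'a ptree) option" where
  "restrE Y (l, Leaf y) = (if y \<in> Y then Some (l, Leaf y) else None)"
| "restrE Y (l, Node c1 c2) =
     (case (restrE Y c1, restrE Y c2) of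
        (None, None) \<Rightarrow> None
      | (Some (l1, t1), None) \<Rightarrow> Some (l + l1, t1)
      | (None, Some (l2, t2)) \<Rightarrow> Some (l + l2, t2)
      | (Some a, Some b) \<Rightarrow> Some (l, Node a b))"

text \<open>Induced subtree T_Y; if the root ends with out-degree 1, it and its
incident edge are deleted.  None if Y contains no leaf of T.\<close>
fun restr :: "'a set \<Rightarrow> 'a ptree \<Rightarrow> 'a ptree option" where
  "restr Y (Leaf y) = (if y \<in> Y then Some (Leaf y) else None)"
| "restr Y (Node c1 c2) =
     (case (restrE Y c1, restrE Y c2) of
        (None, None) \<Rightarrow> None
      | (Some (l1, t1), None) \<Rightarrow> Some t1
      | (None, Some (l2, t2)) \<Rightarrow> Some t2
      | (Some a, Some b) \<Rightarrow> Some (Node a b))"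

end

theory Submission
  imports Defs
begin

text \<open>Restricting the leaf set never increases the number of leaves below an edge,
while suppressing a vertex of out-degree one moves the length of the deleted edge down
onto an edge with at most as many descendant leaves.  Hence every summand of the Fair
Proportion index along the path to a surviving leaf can only grow; the induction runs
over planted subtrees, i.e. subtrees together with their incoming edge.  The hypotheses
on T_a and T_b guarantee that the root of T survives, so T_Y is the planted restriction
of T with a root edge of length zero.\<close>

fun FP_planted :: "real \<times> 'a ptree \<Rightarrow> 'a \<Rightarrow> real" where
  "FP_planted (l, t) x = l / real (card (set (leaves t))) + FP t x"

lemma card_leaves_pos: "card (set (leaves t)) > 0"
  by (induction t rule: leaves.induct) (auto simp: card_gt_0_iff)

lemma FP_planted_add_length:
  "FP_planted (l + a, t) x = l / real (card (set (leaves t))) + FP_planted (a, t) x"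
  by (simp add: add_divide_distrib)

lemma divide_card_leaves_mono:
  assumes "0 \<le> l" "set (leaves u) \<subseteq> set (leaves t)"
  shows "l / real (card (set (leaves t))) \<le> l / real (card (set (leaves u)))"
proof -
  have "card (set (leaves u)) \<le> card (set (leaves t))"
    using assms(2) by (intro card_mono) auto
  then show ?thesis
    using assms(1) card_leaves_pos[of u] by (intro divide_left_mono) auto
qed

lemma restrE_eq_None_iff: "restrE Y (l, t) = None \<longleftrightarrow> set (leaves t) \<inter> Y = {}"
proof (induction t arbitrary: l rule: leaves.induct)
  case (2 l1 t1 l2 t2)
  then show ?case
    using "2.IH"(1)[of l1] "2.IH"(2)[of l2]
    by (cases "restrE Y (l1, t1)"; cases "restrE Y (l2, t2)") (auto split: prod.splits)
qed auto

lemma set_leaves_restrE: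
  "restrE Y (l, t) = Some (l', t') \<Longrightarrow> set (leaves t') = set (leaves t) \<inter> Y"
proof (induction t arbitrary: l l' t' rule: leaves.induct)
  case (2 l1 t1 l2 t2)
  then show ?case
    using restrE_eq_None_iff[of Y l1 t1] restrE_eq_None_iff[of Y l2 t2]
    by (cases "restrE Y (l1, t1)"; cases "restrE Y (l2, t2)") (auto split: prod.splits)
qed (auto split: if_splits)

lemma restrE_SomeE:
  assumes "x \<in> set (leaves t)" "x \<in> Y"
  obtains a s where "restrE Y (l, t) = Some (a, s)" "x \<in> set (leaves s)"
proof -
  obtain a s where r: "restrE Y (l, t) = Some (a, s)"
    using assms restrE_eq_None_iff[of Y l t] by (cases "restrE Y (l, t)") auto
  then show thesis
    using that assms set_leaves_restrE[OF r] by blast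
qed

lemma FP_planted_le_restrE:
  assumes "pos_lengths t" "0 \<le> l" "x \<in> set (leaves t)" "x \<in> Y"
    and "restrE Y (l, t) = Some (l', t')"
  shows "FP_planted (l, t) x \<le> FP_planted (l', t') x"
  using assms
proof (induction t arbitrary: l l' t' rule: leaves.induct)
  case (1 y)
  then show ?case by (auto split: if_splits)
next
  case (2 l1 t1 l2 t2)
  let ?t = "Node (l1, t1) (l2, t2)"
  let ?card = "\<lambda>u. real (card (set (leaves u)))"
  obtain c c' u where root: "FP_planted (l, ?t) x = l / ?card ?t + FP_planted c x"
    and IH: "FP_planted c x \<le> FP_planted c' x"
    and sub: "set (leaves u) \<subseteq> set (leaves ?t)"
    and new: "FP_planted (l', t') x = l / ?card u + FP_planted c' x"
  proof (cases "x \<in> set (leaves t1)")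
    case True
    obtain a1 s1 where r1: "restrE Y (l1, t1) = Some (a1, s1)" and x1: "x \<in> set (leaves s1)"
      using restrE_SomeE[OF True "2.prems"(4)] .
    have IH1: "FP_planted (l1, t1) x \<le> FP_planted (a1, s1) x"
      using "2.IH"(1)[OF _ _ True "2.prems"(4) r1] "2.prems"(1) by simp
    have root1: "FP_planted (l, ?t) x = l / ?card ?t + FP_planted (l1, t1) x"
      using True by simp
    show thesis
    proof (cases "restrE Y (l2, t2)")
      case None
      then have "l' = l + a1" "t' = s1" using "2.prems"(5) r1 by auto
      then have new: "FP_planted (l', t') x = l / ?card s1 + FP_planted (a1, s1) x"
        by (simp only: FP_planted_add_length)
      show thesis
        by (rule that[OF root1 IH1 _ new]) (use set_leaves_restrE[OF r1] in auto)
    next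
      case (Some c2)
      then obtain a2 s2 where r2: "restrE Y (l2, t2) = Some (a2, s2)" by (cases c2) auto
      then have eq: "l' = l" "t' = Node (a1, s1) (a2, s2)" using "2.prems"(5) r1 by auto
      have new: "FP_planted (l', t') x = l / ?card t' + FP_planted (a1, s1) x"
        using eq x1 by simp
      show thesis
        by (rule that[OF root1 IH1 _ new])
          (use eq set_leaves_restrE[OF r1] set_leaves_restrE[OF r2] in auto)
    qed
  next
    case False
    then have x2: "x \<in> set (leaves t2)" using "2.prems"(3) by auto
    obtain a2 s2 where r2: "restrE Y (l2, t2) = Some (a2, s2)" and xs2: "x \<in> set (leaves s2)"
      using restrE_SomeE[OF x2 "2.prems"(4)] .
    have IH2: "FP_planted (l2, t2) x \<le> FP_planted (a2, s2) x"
      using "2.IH"(2)[OF _ _ x2 "2.prems"(4) r2] "2.prems"(1) by simp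
    have root2: "FP_planted (l, ?t) x = l / ?card ?t + FP_planted (l2, t2) x"
      using False x2 by simp
    show thesis
    proof (cases "restrE Y (l1, t1)")
      case None
      then have "l' = l + a2" "t' = s2" using "2.prems"(5) r2 by auto
      then have new: "FP_planted (l', t') x = l / ?card s2 + FP_planted (a2, s2) x"
        by (simp only: FP_planted_add_length)
      show thesis
        by (rule that[OF root2 IH2 _ new]) (use set_leaves_restrE[OF r2] in auto)
    next
      case (Some c1)
      then obtain a1 s1 where r1: "restrE Y (l1, t1) = Some (a1, s1)" by (cases c1) auto
      then have eq: "l' = l" "t' = Node (a1, s1) (a2, s2)" using "2.prems"(5) r2 by auto
      have "x \<notin> set (leaves s1)" using set_leaves_restrE[OF r1] False by auto
      then have new: "FP_planted (l', t') x = l / ?card t' + FP_planted (a2, s2) x"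
        using eq xs2 by simp
      show thesis
        by (rule that[OF root2 IH2 _ new])
          (use eq set_leaves_restrE[OF r1] set_leaves_restrE[OF r2] in auto)
    qed
  qed
  show ?case
    using root IH new divide_card_leaves_mono[OF "2.prems"(2) sub] by linarith
qed

theorem lemma1:
  fixes T Ta Tb :: "'a ptree" and la lb :: real and X' :: "'a set"
  assumes "phylo T"
    and "T = Node (la, Ta) (lb, Tb)"
    and "X' \<subseteq> set (leaves T)"
    and "\<not> set (leaves Ta) \<subseteq> X'"
    and "\<not> set (leaves Tb) \<subseteq> X'"
  shows "\<forall>x \<in> set (leaves T) - X'.
           FP T x \<le> FP (the (restr (set (leaves T) - X') T)) x"
proof
  define Y where "Y = set (leaves T) - X'"
  fix x assume "x \<in> set (leaves T) - X'"
  then have x: "x \<in> set (leaves T)" "x \<in> Y" by (auto simp: Y_def)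
  obtain a1 s1 where r1: "restrE Y (la, Ta) = Some (a1, s1)"
    using assms(2,4) restrE_eq_None_iff[of Y la Ta] unfolding Y_def
    by (cases "restrE Y (la, Ta)") auto
  obtain a2 s2 where r2: "restrE Y (lb, Tb) = Some (a2, s2)"
    using assms(2,5) restrE_eq_None_iff[of Y lb Tb] unfolding Y_def
    by (cases "restrE Y (lb, Tb)") auto
  have restr: "restrE Y (0, T) = Some (0, the (restr Y T))"
    using r1 r2 by (simp add: assms(2))
  have "pos_lengths T"
    using assms(1) by (simp add: phylo_def)
  from FP_planted_le_restrE[OF this order_refl x restr]
  show "FP T x \<le> FP (the (restr (set (leaves T) - X') T)) x"
    unfolding Y_def by simp
qed

end
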